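(* Fix a constant arity $k\in\mathbb{N}_+$. There is a constant $C>0$ (depending only on $k$) such that for every $\varepsilon>0$ there exists an $(\varepsilon,0)$-differentially private algorithm that, on every Max-CSP instance $\Phi$ (with constraints of arity at most $k$), outputs a (random) assignment $x\in\{\pm1\}^n$ with $$\mathbb{E}[\mathrm{val}_\Phi(x)]\ \ge\ \left(1-\frac{C}{\varepsilon}\right)\mathrm{OPT}(\Phi),$$ where $\mathrm{OPT}(\Phi)$ is the maximum number of constraints of $\Phi$ satisfiable by a single assignment.
   Context: A Max-CSP instance $\Phi$ on $n$ Boolean variables $x_1,\dots,x_n\in\{\pm1\}$ is a multiset of $m$ constraints $(P_i,S_i)$, where $S_i$ is an ordered list of at most $k$ indices from $[n]$ (the scope) and $P_i:\{\pm1\}^{|S_i|}\to\{0,1\}$ is a predicate; the constraint is satisfied by $x$ if $P_i(x_{S_i})=1$, and $\mathrm{val}_\Phi(x)$ is the number of satisfied constraints. The number of variables $n$ is public. Two instances are neighboring if one is obtained from the other by adding or removing a single constraint. A randomized algorithm $\mathcal{M}$ is $(\varepsilon,\delta)$-differentially private if for all neighboring $\Phi,\Phi'$ and all measurable sets $T$ of outputs, $\Pr[\mathcal{M}(\Phi)\in T]\le e^{\varepsilon}\Pr[\mathcal{M}(\Phi')\in T]+\delta$. *)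

theory Defs
  imports "HOL-Probability.Probability" "HOL-Library.Multiset"
begin

text \<open>Boolean variables x_i in {+1,-1} are encoded as bool (True = +1, False = -1);
  an assignment to n variables is a bool list of length n (variables indexed 0..n-1).
  A constraint is a pair (P, S): a predicate P on tuples (lists) and an ordered scope S.\<close>

type_synonym constr = "(bool list \<Rightarrow> bool) \<times> nat list"
type_synonym csp_inst = "constr multiset"

definition assignments :: "nat \<Rightarrow> bool list set" where
  "assignments n = {x. length x = n}"

definition sat :: "constr \<Rightarrow> bool list \<Rightarrow> bool" where
  "sat c x = fst c (map (\<lambda>i. x ! i) (snd c))"

definition val :: "csp_inst \<Rightarrow> bool list \<Rightarrow> nat" where
  "val \<Phi> x = size (filter_mset (\<lambda>c. sat c x) \<Phi>)"

definition OPT :: "nat \<Rightarrow> csp_inst \<Rightarrow> nat" where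
  "OPT n \<Phi> = Max (val \<Phi> ` assignments n)"

definition valid_instance :: "nat \<Rightarrow> nat \<Rightarrow> csp_inst \<Rightarrow> bool" where
  "valid_instance k n \<Phi> \<longleftrightarrow>
     (\<forall>c \<in># \<Phi>. length (snd c) \<le> k \<and> (\<forall>i \<in> set (snd c). i < n))"

definition neighboring :: "csp_inst \<Rightarrow> csp_inst \<Rightarrow> bool" where
  "neighboring \<Phi> \<Phi>' \<longleftrightarrow> (\<exists>c. \<Phi>' = \<Phi> + {#c#} \<or> \<Phi> = \<Phi>' + {#c#})"

text \<open>An algorithm takes the public n and the instance and returns a distribution
  over outputs. (eps,delta)-DP over the domain of valid arity-k instances.\<close>
definition diff_private ::
  "nat \<Rightarrow> real \<Rightarrow> real \<Rightarrow> (nat \<Rightarrow> csp_inst \<Rightarrow> 'a pmf) \<Rightarrow> bool" where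
  "diff_private k \<epsilon> \<delta> M \<longleftrightarrow>
     (\<forall>n \<Phi> \<Phi>' T. valid_instance k n \<Phi> \<longrightarrow> valid_instance k n \<Phi>' \<longrightarrow> neighboring \<Phi> \<Phi>' \<longrightarrow>
        measure_pmf.prob (M n \<Phi>) T \<le> exp \<epsilon> * measure_pmf.prob (M n \<Phi>') T + \<delta>)"

end

theory Submission
  imports Defs
begin

text \<open>The mechanism samples x with probability proportional to exp (\<epsilon>/2 * val \<Phi> x). Adding or
  removing one constraint changes every score by at most 1, so every weight and the normalising
  sum change by a factor of at most exp (\<epsilon>/2), which gives \<epsilon>-differential privacy.
  For utility, the entropy of the sampling distribution is at most n ln 2, which bounds the log of
  the normalising sum by n ln 2 + \<epsilon>/2 times the expected value. Conversely, the constraints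
  satisfied by an optimal assignment y mention at most k OPT variables, and every assignment
  agreeing with y on them is optimal too; so at least 2^(n - k OPT) assignments have weight
  exp (\<epsilon>/2 * OPT). Comparing the two bounds gives an expected value of at least
  OPT - 2 k ln 2 OPT / \<epsilon>.\<close>

definition partition_fn :: "real \<Rightarrow> 'a set \<Rightarrow> ('a \<Rightarrow> real) \<Rightarrow> real" where
  "partition_fn \<beta> A u = (\<Sum>y\<in>A. exp (\<beta> * u y))"

text \<open>Meaningful only for finite nonempty A; otherwise the weights do not sum to 1 and
  embed_pmf returns an unspecified distribution.\<close>

definition exp_mechanism :: "real \<Rightarrow> 'a set \<Rightarrow> ('a \<Rightarrow> real) \<Rightarrow> 'a pmf" where
  "exp_mechanism \<beta> A u =
     embed_pmf (\<lambda>x. if x \<in> A then exp (\<beta> * u x) / partition_fn \<beta> A u else 0)"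

lemma entropy_le_ln_card:
  assumes "finite A" and pos: "\<And>x. x \<in> A \<Longrightarrow> q x > 0" and sum1: "sum q A = 1"
  shows "(\<Sum>x\<in>A. - q x * ln (q x)) \<le> ln (card A)"
proof -
  define N where "N = real (card A)"
  have "A \<noteq> {}" using sum1 by auto
  then have N_pos: "N > 0" using \<open>finite A\<close> by (simp add: N_def card_gt_0_iff)
  have term_eq: "q x * ln (1 / (q x * N)) = - q x * ln (q x) - q x * ln N" if "x \<in> A" for x
    using pos[OF that] N_pos by (simp add: ln_div ln_mult algebra_simps)
  have term_le: "q x * ln (1 / (q x * N)) \<le> 1 / N - q x" if "x \<in> A" for x
  proof -
    have "q x * ln (1 / (q x * N)) \<le> q x * (1 / (q x * N) - 1)"
      using pos[OF that] N_pos by (intro mult_left_mono ln_le_minus_one) auto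
    also have "\<dots> = 1 / N - q x" using pos[OF that] N_pos by (simp add: field_simps)
    finally show ?thesis .
  qed
  have "(\<Sum>x\<in>A. - q x * ln (q x)) - ln N = (\<Sum>x\<in>A. q x * ln (1 / (q x * N)))"
    using sum1 term_eq by (simp add: sum_subtractf flip: sum_distrib_right)
  also have "\<dots> \<le> (\<Sum>x\<in>A. 1 / N - q x)"
    using term_le by (rule sum_mono)
  also have "\<dots> = 0"
    using sum1 N_pos by (simp add: sum_subtractf N_def)
  finally show ?thesis by (simp add: N_def)
qed

context
  fixes A :: "'a set"
  assumes finite_A: "finite A" and A_nonempty: "A \<noteq> {}"
begin

lemma partition_fn_pos: "partition_fn \<beta> A u > 0"
  unfolding partition_fn_def using finite_A A_nonempty by (simp add: sum_pos)

lemma pmf_exp_mechanism: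
  "pmf (exp_mechanism \<beta> A u) x = (if x \<in> A then exp (\<beta> * u x) / partition_fn \<beta> A u else 0)"
  unfolding exp_mechanism_def
proof (rule pmf_embed_pmf)
  let ?f = "\<lambda>x. if x \<in> A then exp (\<beta> * u x) / partition_fn \<beta> A u else 0"
  show "\<And>x. 0 \<le> ?f x" using partition_fn_pos by (simp add: less_imp_le)
  have "(\<integral>\<^sup>+ x. ennreal (?f x) \<partial>count_space UNIV) = (\<Sum>x\<in>A. ennreal (?f x))"
    using finite_A by (intro nn_integral_count_space') auto
  also have "\<dots> = ennreal (\<Sum>x\<in>A. exp (\<beta> * u x) / partition_fn \<beta> A u)"
    using partition_fn_pos by (subst sum_ennreal) (auto simp: less_imp_le)
  also have "(\<Sum>x\<in>A. exp (\<beta> * u x) / partition_fn \<beta> A u) = 1"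
    using partition_fn_pos[of \<beta> u] by (simp add: partition_fn_def flip: sum_divide_distrib)
  finally show "(\<integral>\<^sup>+ x. ennreal (?f x) \<partial>count_space UNIV) = 1" by simp
qed

lemma set_pmf_exp_mechanism: "set_pmf (exp_mechanism \<beta> A u) \<subseteq> A"
  by (auto simp: set_pmf_iff pmf_exp_mechanism split: if_splits)

lemma prob_exp_mechanism:
  "measure_pmf.prob (exp_mechanism \<beta> A u) T
     = (\<Sum>x\<in>T \<inter> A. exp (\<beta> * u x) / partition_fn \<beta> A u)"
proof -
  let ?p = "exp_mechanism \<beta> A u"
  have "T \<inter> set_pmf ?p = (T \<inter> A) \<inter> set_pmf ?p"
    using set_pmf_exp_mechanism by blast
  then have "measure_pmf.prob ?p T = measure_pmf.prob ?p (T \<inter> A)"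
    by (metis measure_Int_set_pmf)
  also have "\<dots> = (\<Sum>x\<in>T \<inter> A. pmf ?p x)"
    using finite_A by (simp add: measure_measure_pmf_finite)
  finally show ?thesis by (simp add: pmf_exp_mechanism)
qed

lemma expectation_exp_mechanism:
  "measure_pmf.expectation (exp_mechanism \<beta> A u) f
     = (\<Sum>x\<in>A. exp (\<beta> * u x) / partition_fn \<beta> A u * f x)"
  using set_pmf_exp_mechanism
  by (subst integral_measure_pmf[OF finite_A]) (auto simp: pmf_exp_mechanism)

lemma exp_mechanism_prob_le:
  assumes "\<beta> \<ge> 0" and sensitivity: "\<And>x. x \<in> A \<Longrightarrow> \<bar>u x - v x\<bar> \<le> \<Delta>"
  shows "measure_pmf.prob (exp_mechanism \<beta> A u) T
           \<le> exp (2 * \<beta> * \<Delta>) * measure_pmf.prob (exp_mechanism \<beta> A v) T"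
proof -
  have weight_le: "exp (\<beta> * w x) \<le> exp (\<beta> * \<Delta>) * exp (\<beta> * w' x)"
    if "x \<in> A" "w x \<le> w' x + \<Delta>" for w w' x
    using that \<open>\<beta> \<ge> 0\<close> mult_left_mono[of "w x" "w' x + \<Delta>" \<beta>]
    by (simp add: algebra_simps flip: exp_add)
  have Zv_le: "partition_fn \<beta> A v \<le> exp (\<beta> * \<Delta>) * partition_fn \<beta> A u"
    unfolding partition_fn_def sum_distrib_left
    by (intro sum_mono weight_le) (auto simp: abs_le_iff dest!: sensitivity)
  have "exp (\<beta> * u x) / partition_fn \<beta> A u
          \<le> exp (2 * \<beta> * \<Delta>) * (exp (\<beta> * v x) / partition_fn \<beta> A v)" if "x \<in> A" for x
  proof -
    have "exp (\<beta> * u x) / partition_fn \<beta> A u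
            \<le> exp (\<beta> * \<Delta>) * exp (\<beta> * v x) * (1 / partition_fn \<beta> A u)"
      using that sensitivity[OF that] partition_fn_pos[of \<beta> u]
      by (simp add: weight_le abs_le_iff divide_right_mono)
    also have "\<dots> \<le> exp (\<beta> * \<Delta>) * exp (\<beta> * v x) * (exp (\<beta> * \<Delta>) / partition_fn \<beta> A v)"
      using Zv_le partition_fn_pos[of \<beta> u] partition_fn_pos[of \<beta> v]
      by (intro mult_left_mono) (simp_all add: divide_simps mult.commute)
    also have "\<dots> = exp (2 * \<beta> * \<Delta>) * (exp (\<beta> * v x) / partition_fn \<beta> A v)"
      by (simp add: mult_ac flip: exp_add)
    finally show ?thesis .
  qed
  then show ?thesis
    unfolding prob_exp_mechanism sum_distrib_left by (intro sum_mono) auto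
qed

lemma ln_partition_fn_le:
  "ln (partition_fn \<beta> A u)
     \<le> ln (card A) + \<beta> * measure_pmf.expectation (exp_mechanism \<beta> A u) u"
proof -
  define Z where "Z = partition_fn \<beta> A u"
  define q where "q x = exp (\<beta> * u x) / Z" for x
  have Z_pos: "Z > 0" using partition_fn_pos by (simp add: Z_def)
  have sum_q: "sum q A = 1"
    using Z_pos by (simp add: q_def Z_def partition_fn_def flip: sum_divide_distrib)
  \<comment> \<open>The entropy of q is ln Z - \<beta> E[u].\<close>
  have ln_q: "ln (q x) = \<beta> * u x - ln Z" for x
    using Z_pos by (simp add: q_def ln_div)
  have "- q x * ln (q x) = q x * ln Z - \<beta> * (q x * u x)" for x
    unfolding ln_q by (simp add: algebra_simps)
  then have "(\<Sum>x\<in>A. - q x * ln (q x)) = ln Z - \<beta> * (\<Sum>x\<in>A. q x * u x)"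
    using sum_q by (simp add: sum_subtractf sum_distrib_left flip: sum_distrib_right)
  moreover have "(\<Sum>x\<in>A. - q x * ln (q x)) \<le> ln (card A)"
    using finite_A sum_q Z_pos by (intro entropy_le_ln_card) (auto simp: q_def)
  ultimately show ?thesis
    by (simp add: expectation_exp_mechanism q_def Z_def)
qed

lemma exp_mechanism_utility:
  assumes "\<beta> > 0" and "B \<subseteq> A" "B \<noteq> {}" and good: "\<And>x. x \<in> B \<Longrightarrow> m \<le> u x"
  shows "m - ln (card A / card B) / \<beta> \<le> measure_pmf.expectation (exp_mechanism \<beta> A u) u"
proof -
  have card_B_pos: "card B > 0"
    using \<open>B \<subseteq> A\<close> \<open>B \<noteq> {}\<close> finite_A by (simp add: card_gt_0_iff finite_subset)
  have "card B * exp (\<beta> * m) \<le> (\<Sum>x\<in>B. exp (\<beta> * u x))"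
    using good \<open>\<beta> > 0\<close> by (intro sum_bounded_below) simp
  also have "\<dots> \<le> partition_fn \<beta> A u"
    unfolding partition_fn_def using finite_A \<open>B \<subseteq> A\<close> by (intro sum_mono2) auto
  finally have "ln (card B) + \<beta> * m \<le> ln (partition_fn \<beta> A u)"
    using card_B_pos partition_fn_pos by (simp add: ln_mult flip: ln_le_cancel_iff)
  with ln_partition_fn_le[of \<beta> u]
  have "\<beta> * m - ln (card A / card B) \<le> \<beta> * measure_pmf.expectation (exp_mechanism \<beta> A u) u"
    using card_B_pos A_nonempty finite_A by (simp add: ln_div card_gt_0_iff)
  then show ?thesis using \<open>\<beta> > 0\<close> by (simp add: field_simps)
qed

end

lemma finite_assignments: "finite (assignments n)"
  using finite_lists_length_eq[of "UNIV :: bool set" n] by (simp add: assignments_def)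

lemma card_assignments: "card (assignments n) = 2 ^ n"
  using card_lists_length_eq[of "UNIV :: bool set" n] by (simp add: assignments_def)

lemma assignments_nonempty: "assignments n \<noteq> {}"
  using card_assignments[of n] by auto

lemma val_le_OPT: "x \<in> assignments n \<Longrightarrow> val \<Phi> x \<le> OPT n \<Phi>"
  unfolding OPT_def using finite_assignments by (intro Max_ge) auto

lemma OPT_attained: "\<exists>x \<in> assignments n. val \<Phi> x = OPT n \<Phi>"
  unfolding OPT_def using finite_assignments assignments_nonempty
  by (metis (mono_tags, lifting) Max_in finite_imageI image_iff image_is_empty)

lemma val_add_mset: "val (add_mset c \<Phi>) x = val \<Phi> x + of_bool (sat c x)"
  by (simp add: val_def)

lemma neighboring_val_diff: "neighboring \<Phi> \<Phi>' \<Longrightarrow> \<bar>real (val \<Phi> x) - real (val \<Phi>' x)\<bar> \<le> 1"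
  unfolding neighboring_def by (auto simp: val_add_mset)

lemma card_assignments_le_agreeing:
  assumes "finite I" "I \<subseteq> {..<n}"
  shows "2 ^ n \<le> 2 ^ card I * card {x \<in> assignments n. \<forall>i \<in> I. x ! i = y ! i}"
proof -
  define agreeing where "agreeing = {x \<in> assignments n. \<forall>i \<in> I. x ! i = y ! i}"
  \<comment> \<open>x is recovered from its values on I and from x with I overwritten by y.\<close>
  define encode where
    "encode x = (restrict (\<lambda>i. x ! i) I, map (\<lambda>i. if i \<in> I then y ! i else x ! i) [0..<n])"
    for x :: "bool list"
  have "inj_on encode (assignments n)"
  proof (rule inj_onI)
    fix x x' assume x: "x \<in> assignments n" and x': "x' \<in> assignments n"
      and eq: "encode x = encode x'"
    show "x = x'"
    proof (rule nth_equalityI)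
      show "length x = length x'" using x x' by (simp add: assignments_def)
      fix i assume "i < length x"
      then have "i < n" using x by (simp add: assignments_def)
      from eq have restr: "restrict (\<lambda>i. x ! i) I = restrict (\<lambda>i. x' ! i) I"
        and fill: "map (\<lambda>i. if i \<in> I then y ! i else x ! i) [0..<n]
               = map (\<lambda>i. if i \<in> I then y ! i else x' ! i) [0..<n]"
        by (simp_all add: encode_def)
      show "x ! i = x' ! i"
      proof (cases "i \<in> I")
        case True
        then show ?thesis using fun_cong[OF restr, of i] by simp
      next
        case False
        then show ?thesis using arg_cong[OF fill, of "\<lambda>l. l ! i"] \<open>i < n\<close> by simp
      qed
    qed
  qed
  moreover have "encode ` assignments n \<subseteq> (I \<rightarrow>\<^sub>E (UNIV :: bool set)) \<times> agreeing"
    using assms(2) by (auto simp: encode_def agreeing_def assignments_def)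
  moreover have "finite ((I \<rightarrow>\<^sub>E (UNIV :: bool set)) \<times> agreeing)"
    using assms(1) finite_assignments by (simp add: agreeing_def finite_PiE)
  ultimately have "card (assignments n) \<le> card ((I \<rightarrow>\<^sub>E (UNIV :: bool set)) \<times> agreeing)"
    by (rule card_inj_on_le)
  then show ?thesis
    using assms(1) by (simp add: card_assignments card_cartesian_product card_PiE agreeing_def)
qed

lemma val_le_of_agree_on_satisfied_scopes:
  assumes "\<forall>i \<in> (\<Union>c \<in> set_mset (filter_mset (\<lambda>c. sat c y) \<Phi>). set (snd c)). x ! i = y ! i"
  shows "val \<Phi> y \<le> val \<Phi> x"
  unfolding val_def
proof (rule size_mset_mono, rule filter_mset_mono_strong[OF subset_mset.order_refl])
  fix c assume "c \<in># \<Phi>" "sat c y"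
  then have "c \<in># filter_mset (\<lambda>c. sat c y) \<Phi>" by simp
  then have "\<forall>i \<in> set (snd c). x ! i = y ! i"
    using assms by blast
  then show "sat c x" using \<open>sat c y\<close> unfolding sat_def by (simp cong: map_cong)
qed

lemma card_set_mset_le: "card (set_mset M) \<le> size M"
  by (induction M) (auto simp: card_insert_if)

lemma card_UN_scopes_le:
  assumes "\<forall>c \<in># S. length (snd c) \<le> k"
  shows "card (\<Union>c \<in> set_mset S. set (snd c)) \<le> k * size S"
proof -
  have "card (\<Union>c \<in> set_mset S. set (snd c)) \<le> (\<Sum>c \<in> set_mset S. card (set (snd c)))"
    by (rule card_UN_le) simp
  also have "\<dots> \<le> (\<Sum>c \<in> set_mset S. k)"
    using assms by (intro sum_mono) (meson card_length order_trans)
  also have "\<dots> \<le> k * size S"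
    by (simp add: card_set_mset_le)
  finally show ?thesis .
qed

lemma card_optimal_assignments_ge:
  assumes "valid_instance k n \<Phi>"
  shows "2 ^ n \<le> 2 ^ (k * OPT n \<Phi>) * card {x \<in> assignments n. val \<Phi> x = OPT n \<Phi>}"
proof -
  obtain y where y: "y \<in> assignments n" "val \<Phi> y = OPT n \<Phi>"
    using OPT_attained by blast
  define V where "V = (\<Union>c \<in> set_mset (filter_mset (\<lambda>c. sat c y) \<Phi>). set (snd c))"
  have "card V \<le> k * size (filter_mset (\<lambda>c. sat c y) \<Phi>)"
    unfolding V_def using assms by (intro card_UN_scopes_le) (auto simp: valid_instance_def)
  then have card_V: "card V \<le> k * OPT n \<Phi>"
    using y by (simp add: val_def)
  have V_range: "V \<subseteq> {..<n}"
    using assms by (auto simp: V_def valid_instance_def)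
  have agreeing_optimal: "val \<Phi> x = OPT n \<Phi>"
    if "x \<in> assignments n" and "\<forall>i \<in> V. x ! i = y ! i" for x
  proof (rule antisym)
    show "val \<Phi> x \<le> OPT n \<Phi>" using that(1) by (rule val_le_OPT)
    show "OPT n \<Phi> \<le> val \<Phi> x"
      using val_le_of_agree_on_satisfied_scopes that(2) y(2) unfolding V_def by metis
  qed
  have "(2::nat) ^ n \<le> 2 ^ card V * card {x \<in> assignments n. \<forall>i \<in> V. x ! i = y ! i}"
    using V_range by (intro card_assignments_le_agreeing) (auto simp: V_def)
  also have "\<dots> \<le> 2 ^ (k * OPT n \<Phi>) * card {x \<in> assignments n. val \<Phi> x = OPT n \<Phi>}"
    using card_V finite_assignments
    by (intro mult_mono power_increasing card_mono) (auto intro: agreeing_optimal)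
  finally show ?thesis .
qed

definition max_csp_mechanism :: "real \<Rightarrow> nat \<Rightarrow> csp_inst \<Rightarrow> bool list pmf" where
  "max_csp_mechanism \<epsilon> n \<Phi> = exp_mechanism (\<epsilon> / 2) (assignments n) (\<lambda>x. real (val \<Phi> x))"

lemma set_pmf_max_csp_mechanism: "set_pmf (max_csp_mechanism \<epsilon> n \<Phi>) \<subseteq> assignments n"
  unfolding max_csp_mechanism_def
  using finite_assignments assignments_nonempty by (rule set_pmf_exp_mechanism)

lemma diff_private_max_csp_mechanism:
  assumes "\<epsilon> \<ge> 0"
  shows "diff_private k \<epsilon> 0 (max_csp_mechanism \<epsilon>)"
  unfolding diff_private_def max_csp_mechanism_def
proof (intro allI impI)
  fix n \<Phi> \<Phi>' T assume "neighboring \<Phi> \<Phi>'"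
  then have "\<bar>real (val \<Phi> x) - real (val \<Phi>' x)\<bar> \<le> 1" for x
    by (rule neighboring_val_diff)
  with assms have
    "measure_pmf.prob (exp_mechanism (\<epsilon> / 2) (assignments n) (\<lambda>x. real (val \<Phi> x))) T
       \<le> exp (2 * (\<epsilon> / 2) * 1)
          * measure_pmf.prob (exp_mechanism (\<epsilon> / 2) (assignments n) (\<lambda>x. real (val \<Phi>' x))) T"
    by (intro exp_mechanism_prob_le finite_assignments assignments_nonempty) auto
  then show
    "measure_pmf.prob (exp_mechanism (\<epsilon> / 2) (assignments n) (\<lambda>x. real (val \<Phi> x))) T
       \<le> exp \<epsilon> * measure_pmf.prob (exp_mechanism (\<epsilon> / 2) (assignments n) (\<lambda>x. real (val \<Phi>' x))) T + 0"
    by simp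
qed

lemma expectation_max_csp_mechanism_ge:
  assumes "\<epsilon> > 0" and "valid_instance k n \<Phi>"
  shows "(1 - 2 * k * ln 2 / \<epsilon>) * OPT n \<Phi>
           \<le> measure_pmf.expectation (max_csp_mechanism \<epsilon> n \<Phi>) (\<lambda>x. real (val \<Phi> x))"
proof -
  define optimal where "optimal = {x \<in> assignments n. val \<Phi> x = OPT n \<Phi>}"
  have "optimal \<noteq> {}"
    using OPT_attained by (auto simp: optimal_def)
  then have card_optimal: "card optimal > 0"
    using finite_assignments by (simp add: optimal_def card_gt_0_iff)
  have "real (2 ^ n) \<le> real (2 ^ (k * OPT n \<Phi>) * card optimal)"
    using card_optimal_assignments_ge[OF assms(2)] unfolding optimal_def of_nat_le_iff .
  then have "card (assignments n) / card optimal \<le> 2 ^ (k * OPT n \<Phi>)"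
    using card_optimal by (simp add: card_assignments field_simps)
  then have "ln (card (assignments n) / card optimal) \<le> ln (2 ^ (k * OPT n \<Phi>))"
    using card_optimal by (intro ln_mono) (auto simp: card_assignments)
  also have "\<dots> = k * OPT n \<Phi> * ln 2"
    by (simp add: ln_realpow)
  finally have "ln (card (assignments n) / card optimal) \<le> k * OPT n \<Phi> * ln 2" .
  moreover have "OPT n \<Phi> - ln (card (assignments n) / card optimal) / (\<epsilon> / 2)
      \<le> measure_pmf.expectation (max_csp_mechanism \<epsilon> n \<Phi>) (\<lambda>x. real (val \<Phi> x))"
    unfolding max_csp_mechanism_def using assms(1) \<open>optimal \<noteq> {}\<close>
    by (intro exp_mechanism_utility finite_assignments assignments_nonempty)
      (auto simp: optimal_def)
  ultimately show ?thesis
    using assms(1) by (simp add: field_simps)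
qed

theorem corollary1p1:
  fixes k :: nat
  assumes "k \<ge> 1"
  shows "\<exists>C>0. \<forall>\<epsilon>>0. \<exists>M :: nat \<Rightarrow> csp_inst \<Rightarrow> bool list pmf.
           diff_private k \<epsilon> 0 M \<and>
           (\<forall>n \<Phi>. valid_instance k n \<Phi> \<longrightarrow>
              set_pmf (M n \<Phi>) \<subseteq> assignments n \<and>
              measure_pmf.expectation (M n \<Phi>) (\<lambda>x. real (val \<Phi> x))
                \<ge> (1 - C / \<epsilon>) * real (OPT n \<Phi>))"
proof (intro exI[of _ "2 * real k * ln 2"] conjI allI impI)
  show "2 * real k * ln 2 > 0" using assms by simp
  fix \<epsilon> :: real assume "\<epsilon> > 0"
  show "\<exists>M :: nat \<Rightarrow> csp_inst \<Rightarrow> bool list pmf.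
           diff_private k \<epsilon> 0 M \<and>
           (\<forall>n \<Phi>. valid_instance k n \<Phi> \<longrightarrow>
              set_pmf (M n \<Phi>) \<subseteq> assignments n \<and>
              measure_pmf.expectation (M n \<Phi>) (\<lambda>x. real (val \<Phi> x))
                \<ge> (1 - 2 * real k * ln 2 / \<epsilon>) * real (OPT n \<Phi>))"
    using \<open>\<epsilon> > 0\<close> diff_private_max_csp_mechanism set_pmf_max_csp_mechanism
      expectation_max_csp_mechanism_ge
    by (intro exI[of _ "max_csp_mechanism \<epsilon>"] conjI allI impI) simp_all
qed

end
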